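(* Let $a<b$, $n\ge 1$, $h=(b-a)/n$, $x_k=a+kh$, and let $S^n_{5,1}$ and the Gaussian quadrature rule be as in the context. Then for every $k=1,\dots,n$ the open interval $J_k=(x_{k-1},x_k)$ contains at least two nodes of the Gaussian quadrature rule.
   Context: $S^n_{5,1}=\{f\in C^1[a,b]:\ f|_{(x_{k-1},x_k)}\text{ is a polynomial of degree}\le 5,\ k=1,\dots,n\}$; it has dimension $4n+2$. A Gaussian quadrature rule for $S^n_{5,1}$ is a rule $f\mapsto\sum_{i=1}^{2n+1}\omega_i f(\tau_i)$ with $2n+1$ distinct nodes $\tau_i\in[a,b]$ and positive weights $\omega_i>0$ such that $\int_a^b f(t)\,dt=\sum_{i=1}^{2n+1}\omega_i f(\tau_i)$ for every $f\in S^n_{5,1}$ (by a result of Micchelli and Pinkus, $2n+1$ is the minimal number of nodes of a rule exact on $S^n_{5,1}$, and such a rule exists). *)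

theory Defs
  imports "HOL-Analysis.Analysis" "HOL-Computational_Algebra.Polynomial"
begin

definition knot :: "real \<Rightarrow> real \<Rightarrow> nat \<Rightarrow> nat \<Rightarrow> real" where
  "knot a b n k = a + real k * ((b - a) / real n)"

definition C1_on :: "real \<Rightarrow> real \<Rightarrow> (real \<Rightarrow> real) \<Rightarrow> bool" where
  "C1_on a b f \<longleftrightarrow> (\<exists>f'. (\<forall>x\<in>{a..b}. (f has_real_derivative f' x) (at x within {a..b}))
                         \<and> continuous_on {a..b} f')"

definition spline51 :: "real \<Rightarrow> real \<Rightarrow> nat \<Rightarrow> (real \<Rightarrow> real) set" where
  "spline51 a b n = {f. C1_on a b f \<and>
     (\<forall>k\<in>{1..n}. \<exists>p :: real poly. degree p \<le> 5 \<and>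
        (\<forall>x\<in>{knot a b n (k - 1)<..<knot a b n k}. f x = poly p x))}"

definition gaussian_rule51 :: "real \<Rightarrow> real \<Rightarrow> nat \<Rightarrow> (nat \<Rightarrow> real) \<Rightarrow> (nat \<Rightarrow> real) \<Rightarrow> bool" where
  "gaussian_rule51 a b n \<tau> \<omega> \<longleftrightarrow>
     inj_on \<tau> {..<2*n+1} \<and>
     (\<forall>i<2*n+1. \<tau> i \<in> {a..b} \<and> \<omega> i > 0) \<and>
     (\<forall>f\<in>spline51 a b n. integral {a..b} f = (\<Sum>i<2*n+1. \<omega> i * f (\<tau> i)))"

end

theory Submission
  imports Defs
begin

text \<open>Suppose some cell J contained at most one node. In the local coordinate s \<in> [0,1] of J,
  the C1 quintic bump s^2(1 - s)^2(s - 1/2), extended by zero, has integral 0, so the rule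
  forces that node to be the midpoint of J. Next, if the nodes of a cell all sit at its midpoint,
  the three-cell spline -s^2(1 - s)(s - 1/2)^2, s(1 - s)(s - 1/2)^2, -s(1 - s)^2(s - 1/2)^2
  centred on that cell has integral 0 and is \<le> 0 at every node; positivity of the weights makes it
  vanish at every node, which puts the nodes of the cell to the left at its midpoint as well.
  Propagating to the first cell, or starting in the last one, the boundary spline
  s(1 - s)^2(s - 1/2)^2 on the first cell (resp. s^2(1 - s)(s - 1/2)^2 on the last one) vanishes
  at every node but has positive integral: a contradiction.\<close>

definition trunc :: "real \<Rightarrow> (real \<Rightarrow> real) \<Rightarrow> real \<Rightarrow> real" where
  "trunc c g t = (if c \<le> t then g t else 0)"

lemma has_real_derivative_trunc:
  assumes "\<And>x. (g has_real_derivative g' x) (at x)" and "g c = 0" and "g' c = 0"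
  shows "(trunc c g has_real_derivative trunc c g' t) (at t)"
proof -
  have "((\<lambda>x. if x \<in> {c..} then g x else 0) has_vector_derivative
          (if t \<in> {c..} then g' t else 0)) (at t within UNIV)"
  proof (rule has_vector_derivative_If_within_closures[where T = "{..<c}"])
    show "(g has_vector_derivative g' x) (at x within {c..} \<union> (closure {c..} \<inter> closure {..<c}))"
      for x
      using assms(1)[of x]
      unfolding has_real_derivative_iff_has_vector_derivative[symmetric]
      by (rule has_field_derivative_at_within)
  qed (use assms(2,3) in auto)
  then show ?thesis
    unfolding trunc_def[abs_def] by (simp add: has_real_derivative_iff_has_vector_derivative)
qed

lemma continuous_on_trunc:
  assumes "continuous_on UNIV g" and "g c = 0"
  shows "continuous_on S (trunc c g)"
proof -
  have "trunc c g = (\<lambda>t. g (max c t))"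
    using assms(2) by (auto simp: trunc_def fun_eq_iff max_def)
  moreover have "continuous_on S (\<lambda>t. max c t)"
    by (intro continuous_intros)
  then have "continuous_on S (\<lambda>t. g (max c t))"
    using continuous_on_compose2[OF assms(1)] by blast
  ultimately show ?thesis by simp
qed

lemma has_real_derivative_trunc_sum:
  assumes "\<And>c P. (c, P) \<in> set L \<Longrightarrow> poly P c = 0 \<and> poly (pderiv P) c = 0"
  shows "((\<lambda>t. \<Sum>(c, P)\<leftarrow>L. trunc c (poly P) t) has_real_derivative
           (\<Sum>(c, P)\<leftarrow>L. trunc c (poly (pderiv P)) t)) (at t)"
  using assms
proof (induction L)
  case (Cons cP L)
  obtain c P where cP: "cP = (c, P)" by fastforce
  have "(trunc c (poly P) has_real_derivative trunc c (poly (pderiv P)) t) (at t)"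
    using Cons.prems[of c P] cP by (intro has_real_derivative_trunc) (auto intro: poly_DERIV)
  with Cons cP show ?case by (auto intro!: derivative_eq_intros)
qed simp

lemma continuous_on_trunc_sum_pderiv:
  assumes "\<And>c P. (c, P) \<in> set L \<Longrightarrow> poly (pderiv P) c = 0"
  shows "continuous_on S (\<lambda>t. \<Sum>(c, P)\<leftarrow>L. trunc c (poly (pderiv P)) t)"
  using assms
proof (induction L)
  case (Cons cP L)
  obtain c P where cP: "cP = (c, P)" by fastforce
  have "continuous_on S (trunc c (poly (pderiv P)))"
    using Cons.prems[of c P] cP by (intro continuous_on_trunc) (auto intro: continuous_intros)
  with Cons cP show ?case by (auto intro!: continuous_intros)
qed simp

lemma trunc_sum_eq_poly_between:
  assumes "\<And>c P. (c, P) \<in> set L \<Longrightarrow> degree P \<le> d \<and> (c \<le> l \<or> r \<le> c)"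
  shows "\<exists>p. degree p \<le> d \<and> (\<forall>t\<in>{l<..<r}. (\<Sum>(c, P)\<leftarrow>L. trunc c (poly P) t) = poly p t)"
  using assms
proof (induction L)
  case Nil
  show ?case by (auto intro: exI[of _ 0])
next
  case (Cons cP L)
  obtain c P where cP: "cP = (c, P)" by fastforce
  from Cons obtain p where p: "degree p \<le> d"
    "\<forall>t\<in>{l<..<r}. (\<Sum>(c, P)\<leftarrow>L. trunc c (poly P) t) = poly p t" by auto
  from Cons.prems[of c P] cP have P: "degree P \<le> d" "c \<le> l \<or> r \<le> c" by auto
  show ?case
  proof (cases "c \<le> l")
    case True
    then show ?thesis using p P cP
      by (intro exI[of _ "P + p"]) (auto simp: trunc_def intro: order.trans[OF degree_add_le_max])
  next
    case False
    then show ?thesis using p P cP by (intro exI[of _ p]) (auto simp: trunc_def)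
  qed
qed

lemma knot_le_knot_iff:
  assumes "a < b" and "1 \<le> n"
  shows "knot a b n i \<le> knot a b n j \<longleftrightarrow> i \<le> j"
proof -
  have "(b - a) / real n > 0" using assms by simp
  from mult_le_cancel_right_pos[OF this, of "real i" "real j"] show ?thesis
    unfolding knot_def by simp
qed

lemma trunc_sum_in_spline51:
  assumes "a < b" and "1 \<le> n" and "degree P\<^sub>0 \<le> 5"
    and L: "\<And>c P. (c, P) \<in> set L \<Longrightarrow> poly P c = 0 \<and> poly (pderiv P) c = 0 \<and> degree P \<le> 5"
    and knots: "fst ` set L \<subseteq> range (knot a b n)"
  shows "(\<lambda>t. poly P\<^sub>0 t + (\<Sum>(c, P)\<leftarrow>L. trunc c (poly P) t)) \<in> spline51 a b n"
  unfolding spline51_def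
proof (intro CollectI conjI ballI)
  let ?f' = "\<lambda>t. poly (pderiv P\<^sub>0) t + (\<Sum>(c, P)\<leftarrow>L. trunc c (poly (pderiv P)) t)"
  have "((\<lambda>t. poly P\<^sub>0 t + (\<Sum>(c, P)\<leftarrow>L. trunc c (poly P) t)) has_real_derivative ?f' t) (at t)"
    for t
    using has_real_derivative_trunc_sum[of L t] L by (auto intro!: derivative_eq_intros poly_DERIV)
  moreover have "continuous_on {a..b} ?f'"
    using continuous_on_trunc_sum_pderiv[of L "{a..b}"] L by (auto intro!: continuous_intros)
  ultimately show "C1_on a b (\<lambda>t. poly P\<^sub>0 t + (\<Sum>(c, P)\<leftarrow>L. trunc c (poly P) t))"
    unfolding C1_on_def by (intro exI[of _ ?f']) (auto intro: has_field_derivative_at_within)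
next
  fix k assume k: "k \<in> {1..n}"
  have "c \<le> knot a b n (k - 1) \<or> knot a b n k \<le> c" if cP: "(c, P) \<in> set L" for c P
  proof -
    from cP have "c \<in> fst ` set L" by force
    with knots obtain j where "c = knot a b n j" by blast
    with k show ?thesis using knot_le_knot_iff[OF assms(1,2)] by (cases "j < k") auto
  qed
  then obtain p where "degree p \<le> 5" "\<forall>t\<in>{knot a b n (k - 1)<..<knot a b n k}.
      (\<Sum>(c, P)\<leftarrow>L. trunc c (poly P) t) = poly p t"
    using trunc_sum_eq_poly_between[of L 5 "knot a b n (k - 1)" "knot a b n k"] L by blast
  then show "\<exists>p. degree p \<le> 5 \<and> (\<forall>t\<in>{knot a b n (k - 1)<..<knot a b n k}.
      poly P\<^sub>0 t + (\<Sum>(c, P)\<leftarrow>L. trunc c (poly P) t) = poly p t)"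
    using assms(3) by (intro exI[of _ "P\<^sub>0 + p"]) (auto intro: order.trans[OF degree_add_le_max])
qed

lemma has_integral_poly_01:
  "(poly p has_integral (\<Sum>i\<le>degree p. coeff p i / real (Suc i))) {0..1}"
proof -
  have "((\<lambda>x. coeff p i * x ^ i) has_integral coeff p i / real (Suc i)) {0..1}" for i
  proof -
    have "((\<lambda>x. coeff p i * x ^ Suc i / Suc i) has_real_derivative coeff p i * x ^ i) (at x)"
      for x :: real
      using DERIV_cdivide[OF DERIV_cmult[OF DERIV_pow[of "Suc i" x]], of "coeff p i" "Suc i"]
      by simp
    then have "((\<lambda>x. coeff p i * x ^ i) has_integral
        coeff p i * 1 ^ Suc i / Suc i - coeff p i * 0 ^ Suc i / Suc i) {0..1::real}"
      by (intro fundamental_theorem_of_calculus)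
         (auto simp: has_real_derivative_iff_has_vector_derivative[symmetric]
               intro: has_field_derivative_at_within)
    then show ?thesis by simp
  qed
  then have "((\<lambda>x. \<Sum>i\<le>degree p. coeff p i * x ^ i) has_integral
      (\<Sum>i\<le>degree p. coeff p i / real (Suc i))) {0..1}"
    by (intro has_integral_sum) auto
  then show ?thesis by (simp add: poly_altdef[abs_def])
qed

lemma has_integral_rescale:
  fixes c h :: real
  assumes "h > 0" and "(g has_integral I) {0..1}"
  shows "((\<lambda>t. g ((t - c) / h)) has_integral h * I) {c..c + h}"
proof -
  have "(g has_integral I) (cbox 0 1)" using assms(2) by simp
  from has_integral_affinity'[OF this, of "1/h" "-c/h"] assms(1)
  have "((\<lambda>t. g ((t - c) / h)) has_integral h * I) {c..(c * h + h * h) / h}"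
    by (simp add: field_simps)
  moreover have "(c * h + h * h) / h = c + h" using assms(1) by (simp add: field_simps)
  ultimately show ?thesis by simp
qed

lemma has_integral_vanishing_outside:
  fixes a b c d :: real and f :: "real \<Rightarrow> real"
  assumes "(f has_integral I) {c..d}" and "a \<le> c" "c \<le> d" "d \<le> b"
    and "\<And>t. t \<in> {a..b} \<Longrightarrow> t \<notin> {c<..<d} \<Longrightarrow> f t = 0"
  shows "(f has_integral I) {a..b}"
proof -
  have left: "(f has_integral 0) {a..c}" and right: "(f has_integral 0) {d..b}"
    using assms(2-5) by (auto intro!: has_integral_eq[OF _ has_integral_0])
  have "(f has_integral 0 + I) {a..d}"
    using has_integral_combine[OF _ _ left assms(1)] assms(2-4) by auto
  then have "(f has_integral 0 + I + 0) {a..b}"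
    using has_integral_combine[OF _ _ _ right] assms(2-4) by auto
  then show ?thesis by simp
qed

definition rescale :: "real \<Rightarrow> real \<Rightarrow> real poly \<Rightarrow> real poly" where
  "rescale h c p = p \<circ>\<^sub>p [:- c / h, 1 / h:]"

lemma poly_rescale: "h \<noteq> 0 \<Longrightarrow> poly (rescale h c p) t = poly p ((t - c) / h)"
  by (simp add: rescale_def poly_pcompose field_simps)

lemma poly_pderiv_rescale:
  "h \<noteq> 0 \<Longrightarrow> poly (pderiv (rescale h c p)) t = poly (pderiv p) ((t - c) / h) / h"
  by (simp add: rescale_def pderiv_pcompose poly_pcompose field_simps pderiv_pCons)

lemma degree_rescale_le: "degree (rescale h c p) \<le> degree p"
  by (simp add: rescale_def degree_pcompose)

definition q_mid :: "real poly" where "q_mid = [:0, 0, -1/2, 2, -5/2, 1:]"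
definition q_left :: "real poly" where "q_left = [:0, 1/4, -3/2, 13/4, -3, 1:]"
definition q_right :: "real poly" where "q_right = [:0, 0, 1/4, -5/4, 2, -1:]"
definition q_link :: "real poly" where "q_link = [:0, 1/4, -5/4, 2, -1:]"

lemma poly_q_mid: "poly q_mid s = s\<^sup>2 * (1 - s)\<^sup>2 * (s - 1/2)"
  by (simp add: q_mid_def eval_nat_numeral algebra_simps)

lemma poly_q_left: "poly q_left s = s * (1 - s)\<^sup>2 * (s - 1/2)\<^sup>2"
  by (simp add: q_left_def eval_nat_numeral algebra_simps)

lemma poly_q_right: "poly q_right s = s\<^sup>2 * (1 - s) * (s - 1/2)\<^sup>2"
  by (simp add: q_right_def eval_nat_numeral algebra_simps)

lemma poly_q_link: "poly q_link s = s * (1 - s) * (s - 1/2)\<^sup>2"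
  by (simp add: q_link_def power2_eq_square field_simps)

lemma degree_q_le: "degree q_mid \<le> 5" "degree q_left \<le> 5" "degree q_right \<le> 5" "degree q_link \<le> 5"
  by (simp_all add: q_mid_def q_left_def q_right_def q_link_def)

lemma q_boundary_values:
  "poly q_mid 0 = 0" "poly q_mid 1 = 0" "poly (pderiv q_mid) 0 = 0" "poly (pderiv q_mid) 1 = 0"
  "poly q_left 0 = 0" "poly q_left 1 = 0" "poly (pderiv q_left) 0 = 1/4" "poly (pderiv q_left) 1 = 0"
  "poly q_right 0 = 0" "poly q_right 1 = 0" "poly (pderiv q_right) 0 = 0"
  "poly (pderiv q_right) 1 = -1/4"
  "poly q_link 0 = 0" "poly q_link 1 = 0" "poly (pderiv q_link) 0 = 1/4"
  "poly (pderiv q_link) 1 = -1/4"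
  by (simp_all add: q_mid_def q_left_def q_right_def q_link_def pderiv_pCons)

lemma has_integral_q:
  "(poly q_mid has_integral 0) {0..1}" "(poly q_left has_integral 1/240) {0..1}"
  "(poly q_right has_integral 1/240) {0..1}" "(poly q_link has_integral 1/120) {0..1}"
  using has_integral_poly_01[of q_mid] has_integral_poly_01[of q_left]
    has_integral_poly_01[of q_right] has_integral_poly_01[of q_link]
  by (simp_all add: q_mid_def q_left_def q_right_def q_link_def eval_nat_numeral)

lemma q_mid_eq_0_iff: "0 < s \<Longrightarrow> s < 1 \<Longrightarrow> poly q_mid s = 0 \<longleftrightarrow> s = 1/2"
  by (simp add: poly_q_mid)

lemma q_right_eq_0_iff: "0 < s \<Longrightarrow> s < 1 \<Longrightarrow> poly q_right s = 0 \<longleftrightarrow> s = 1/2"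
  by (simp add: poly_q_right)

lemma q_left_nonneg: "0 \<le> s \<Longrightarrow> s \<le> 1 \<Longrightarrow> 0 \<le> poly q_left s"
  by (simp add: poly_q_left)

lemma q_right_nonneg: "0 \<le> s \<Longrightarrow> s \<le> 1 \<Longrightarrow> 0 \<le> poly q_right s"
  by (simp add: poly_q_right)

definition bump :: "real \<Rightarrow> real \<Rightarrow> real \<Rightarrow> real" where
  "bump h c t = (if c \<le> t \<and> t \<le> c + h then poly q_mid ((t - c) / h) else 0)"

definition left_edge :: "real \<Rightarrow> real \<Rightarrow> real \<Rightarrow> real" where
  "left_edge h a t = (if t \<le> a + h then poly q_left ((t - a) / h) else 0)"

definition right_edge :: "real \<Rightarrow> real \<Rightarrow> real \<Rightarrow> real" where
  "right_edge h c t = (if c \<le> t then poly q_right ((t - c) / h) else 0)"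

definition chain :: "real \<Rightarrow> real \<Rightarrow> real \<Rightarrow> real" where
  "chain h c t =
     (if t \<le> c \<or> c + 3 * h \<le> t then 0
      else if t \<le> c + h then - poly q_right ((t - c) / h)
      else if t \<le> c + 2 * h then poly q_link ((t - (c + h)) / h)
      else - poly q_left ((t - (c + 2 * h)) / h))"

lemma bump_eq_trunc_sum:
  assumes "h > 0"
  shows "bump h c = (\<lambda>t. poly 0 t +
    (\<Sum>(d, P)\<leftarrow>[(c, rescale h c q_mid), (c + h, - rescale h c q_mid)]. trunc d (poly P) t))"
  using assms q_boundary_values by (auto simp: fun_eq_iff bump_def trunc_def poly_rescale)

lemma left_edge_eq_trunc_sum:
  assumes "h > 0"
  shows "left_edge h a = (\<lambda>t. poly (rescale h a q_left) t +
    (\<Sum>(d, P)\<leftarrow>[(a + h, - rescale h a q_left)]. trunc d (poly P) t))"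
  using assms q_boundary_values by (auto simp: fun_eq_iff left_edge_def trunc_def poly_rescale)

lemma right_edge_eq_trunc_sum:
  assumes "h > 0"
  shows "right_edge h c =
    (\<lambda>t. poly 0 t + (\<Sum>(d, P)\<leftarrow>[(c, rescale h c q_right)]. trunc d (poly P) t))"
  using assms by (auto simp: fun_eq_iff right_edge_def trunc_def poly_rescale)

lemma chain_eq_trunc_sum:
  fixes c h :: real
  assumes "h > 0"
  defines "P\<^sub>1 \<equiv> - rescale h c q_right" and "P\<^sub>2 \<equiv> rescale h (c + h) q_link"
    and "P\<^sub>3 \<equiv> - rescale h (c + 2 * h) q_left"
  shows "chain h c = (\<lambda>t. poly 0 t + (\<Sum>(d, P)\<leftarrow>[(c, P\<^sub>1), (c + h, P\<^sub>2 - P\<^sub>1),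
    (c + 2 * h, P\<^sub>3 - P\<^sub>2), (c + 3 * h, - P\<^sub>3)]. trunc d (poly P) t))"
proof -
  have "(c + h - c) / h = 1" "(c + 2 * h - (c + h)) / h = 1" "(c + 3 * h - (c + 2 * h)) / h = 1"
    using assms(1) by (simp_all add: field_simps)
  with assms q_boundary_values show ?thesis
    by (auto simp: fun_eq_iff chain_def trunc_def poly_rescale)
qed

lemma has_integral_bump:
  assumes "h > 0"
  shows "(bump h c has_integral 0) {c..c + h}"
proof -
  have "(bump h c has_integral h * 0) {c..c + h}"
    using has_integral_rescale[OF assms has_integral_q(1), of c]
    by (rule has_integral_eq[rotated]) (simp add: bump_def)
  then show ?thesis by simp
qed

lemma has_integral_left_edge:
  assumes "h > 0"
  shows "(left_edge h a has_integral h / 240) {a..a + h}"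
proof -
  have "(left_edge h a has_integral h * (1/240)) {a..a + h}"
    using has_integral_rescale[OF assms has_integral_q(2), of a]
    by (rule has_integral_eq[rotated]) (simp add: left_edge_def)
  then show ?thesis by simp
qed

lemma has_integral_right_edge:
  assumes "h > 0"
  shows "(right_edge h c has_integral h / 240) {c..c + h}"
proof -
  have "(right_edge h c has_integral h * (1/240)) {c..c + h}"
    using has_integral_rescale[OF assms has_integral_q(3), of c]
    by (rule has_integral_eq[rotated]) (simp add: right_edge_def)
  then show ?thesis by simp
qed

lemma has_integral_chain:
  assumes "h > 0"
  shows "(chain h c has_integral 0) {c..c + 3 * h}"
proof -
  have c2: "c + h + h = c + 2 * h" and c3: "c + 2 * h + h = c + 3 * h" by simp_all
  have p1: "(chain h c has_integral h * - (1/240)) {c..c + h}"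
    using has_integral_rescale[OF assms has_integral_neg[OF has_integral_q(3)], of c]
    by (rule has_integral_eq[rotated]) (use assms in \<open>auto simp: chain_def q_boundary_values\<close>)
  have p2: "(chain h c has_integral h * (1/120)) {c + h..c + 2 * h}"
    using has_integral_rescale[OF assms has_integral_q(4), of "c + h", unfolded c2]
    by (rule has_integral_eq[rotated]) (use assms in \<open>auto simp: chain_def q_boundary_values\<close>)
  have p3: "(chain h c has_integral h * - (1/240)) {c + 2 * h..c + 3 * h}"
    using has_integral_rescale[OF assms has_integral_neg[OF has_integral_q(2)], of "c + 2 * h",
      unfolded c3]
  proof (rule has_integral_eq[rotated])
    fix t assume t: "t \<in> {c + 2 * h..c + 3 * h}"
    have "(c + 2 * h - (c + h)) / h = 1" using assms by (simp add: field_simps)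
    with t assms show "- poly q_left ((t - (c + 2 * h)) / h) = chain h c t"
      by (cases "t = c + 2 * h") (auto simp: chain_def q_boundary_values)
  qed
  have p12: "(chain h c has_integral h * - (1/240) + h * (1/120)) {c..c + 2 * h}"
    using has_integral_combine[OF _ _ p1 p2] assms by simp
  from has_integral_combine[OF _ _ p12 p3] assms show ?thesis by simp
qed

lemma bump_eq_0: "h > 0 \<Longrightarrow> t \<notin> {c<..<c + h} \<Longrightarrow> bump h c t = 0"
  by (auto simp: bump_def q_boundary_values)

lemma left_edge_eq_0:
  assumes "h > 0" and "a \<le> t" and "t \<notin> {a<..<a + h} \<or> t = a + h / 2"
  shows "left_edge h a t = 0"
  using assms by (auto simp: left_edge_def q_boundary_values poly_q_left field_simps)

lemma right_edge_eq_0: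
  assumes "h > 0" and "t \<le> c + h" and "t \<notin> {c<..<c + h} \<or> t = c + h / 2"
  shows "right_edge h c t = 0"
  using assms by (auto simp: right_edge_def q_boundary_values poly_q_right field_simps)

lemma chain_eq_0: "h > 0 \<Longrightarrow> t \<notin> {c<..<c + 3 * h} \<Longrightarrow> chain h c t = 0"
  by (auto simp: chain_def)

lemma chain_first_cell: "t \<in> {c<..c + h} \<Longrightarrow> chain h c t = - poly q_right ((t - c) / h)"
  by (auto simp: chain_def)

lemma chain_nonpos:
  assumes "h > 0" and mid: "t \<in> {c + h<..<c + 2 * h} \<Longrightarrow> t = c + h + h / 2"
  shows "chain h c t \<le> 0"
proof -
  consider "t \<le> c + h" | "t \<in> {c + h<..<c + 2 * h}" | "t = c + 2 * h" | "c + 2 * h < t"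
    by fastforce
  then show ?thesis
  proof cases
    case 1
    have "0 \<le> poly q_right ((t - c) / h)" if "c < t"
      using that 1 assms(1) by (intro q_right_nonneg) (simp_all add: field_simps)
    with 1 show ?thesis by (auto simp: chain_def)
  next
    case 2
    then have "chain h c t = poly q_link ((t - (c + h)) / h)" by (simp add: chain_def)
    also have "(t - (c + h)) / h = 1 / 2" using 2 mid assms(1) by (simp add: field_simps)
    finally show ?thesis by (simp add: poly_q_link)
  next
    case 3
    have "(c + 2 * h - (c + h)) / h = 1" using assms(1) by (simp add: field_simps)
    with 3 assms(1) show ?thesis by (simp add: chain_def q_boundary_values)
  next
    case 4
    have "0 \<le> poly q_left ((t - (c + 2 * h)) / h)" if "t < c + 3 * h"
      using that 4 assms(1) by (intro q_left_nonneg) (simp_all add: field_simps)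
    with 4 assms(1) show ?thesis by (auto simp: chain_def)
  qed
qed

locale gaussian_rule51_setup =
  fixes a b :: real and n :: nat and \<tau> \<omega> :: "nat \<Rightarrow> real"
  assumes a_less_b: "a < b" and n_pos: "1 \<le> n" and rule: "gaussian_rule51 a b n \<tau> \<omega>"
begin

definition h :: real where "h = (b - a) / real n"

lemma h_pos: "h > 0"
  using a_less_b n_pos by (simp add: h_def)

lemma knot_eq: "knot a b n i = a + real i * h"
  by (simp add: knot_def h_def)

lemma knot_Suc: "knot a b n (Suc i) = knot a b n i + h"
  by (simp add: knot_eq algebra_simps)

lemma knot_ge: "a \<le> knot a b n i"
  using h_pos by (simp add: knot_eq)

lemma knot_le: "i \<le> n \<Longrightarrow> knot a b n i \<le> b"
  using knot_le_knot_iff[OF a_less_b n_pos, of i n] n_pos by (simp add: knot_def)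

lemma knot_n: "knot a b n n = b"
  using n_pos by (simp add: knot_def)

lemma knot_last: "knot a b n (n - 1) + h = b"
  using n_pos knot_Suc[of "n - 1"] knot_n by simp

lemma knot_in_range: "knot a b n i + real m * h \<in> range (knot a b n)"
  by (rule range_eqI[of _ _ "i + m"]) (simp add: knot_eq algebra_simps)

text \<open>Cells are numbered from 0: \<open>cell i\<close> is J_(i+1) = (x_i, x_(i+1)) of the statement.\<close>
abbreviation cell :: "nat \<Rightarrow> real set" where
  "cell i \<equiv> {knot a b n i<..<knot a b n (Suc i)}"

definition nodes_at_midpoint :: "nat \<Rightarrow> bool" where
  "nodes_at_midpoint i \<longleftrightarrow> (\<forall>l<2 * n + 1. \<tau> l \<in> cell i \<longrightarrow> \<tau> l = knot a b n i + h / 2)"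

lemma node_in_interval: "l < 2 * n + 1 \<Longrightarrow> \<tau> l \<in> {a..b}"
  using rule by (simp add: gaussian_rule51_def)

lemma weight_pos: "l < 2 * n + 1 \<Longrightarrow> \<omega> l > 0"
  using rule by (simp add: gaussian_rule51_def)

lemma rule_exact:
  "f \<in> spline51 a b n \<Longrightarrow> (f has_integral I) {a..b} \<Longrightarrow> (\<Sum>l<2 * n + 1. \<omega> l * f (\<tau> l)) = I"
  using rule by (auto simp: gaussian_rule51_def integral_unique)

lemma integral_eq_0_if_vanishing_at_nodes:
  assumes "f \<in> spline51 a b n" and "(f has_integral I) {a..b}"
    and "\<And>l. l < 2 * n + 1 \<Longrightarrow> f (\<tau> l) = 0"
  shows "I = 0"
  using rule_exact[OF assms(1,2)] assms(3) by simp

lemma vanishing_at_remaining_node: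
  assumes "f \<in> spline51 a b n" and "(f has_integral 0) {a..b}" and "l\<^sub>0 < 2 * n + 1"
    and "\<And>l. l < 2 * n + 1 \<Longrightarrow> l \<noteq> l\<^sub>0 \<Longrightarrow> f (\<tau> l) = 0"
  shows "f (\<tau> l\<^sub>0) = 0"
proof -
  have "(\<Sum>l<2 * n + 1. \<omega> l * f (\<tau> l)) = (\<Sum>l\<in>{l\<^sub>0}. \<omega> l * f (\<tau> l))"
    by (rule sum.mono_neutral_right) (use assms(3,4) in auto)
  with rule_exact[OF assms(1,2)] weight_pos[OF assms(3)] show ?thesis by simp
qed

lemma vanishing_at_nodes_if_nonpos:
  assumes "f \<in> spline51 a b n" and "(f has_integral 0) {a..b}"
    and "\<And>l. l < 2 * n + 1 \<Longrightarrow> f (\<tau> l) \<le> 0" and "l\<^sub>0 < 2 * n + 1"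
  shows "f (\<tau> l\<^sub>0) = 0"
proof -
  have "(\<Sum>l<2 * n + 1. - (\<omega> l * f (\<tau> l))) = 0"
    using rule_exact[OF assms(1,2)] by (simp add: sum_negf)
  moreover have "\<And>l. l < 2 * n + 1 \<Longrightarrow> 0 \<le> - (\<omega> l * f (\<tau> l))"
    using weight_pos assms(3) by (simp add: mult_nonneg_nonpos less_imp_le)
  ultimately have "\<omega> l\<^sub>0 * f (\<tau> l\<^sub>0) = 0"
    using sum_nonneg_eq_0_iff[of "{..<2 * n + 1}" "\<lambda>l. - (\<omega> l * f (\<tau> l))"] assms(4) by simp
  with weight_pos[OF assms(4)] show ?thesis by simp
qed

lemma bump_in_spline51: "bump h (knot a b n i) \<in> spline51 a b n"
  unfolding bump_eq_trunc_sum[OF h_pos]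
proof (rule trunc_sum_in_spline51[OF a_less_b n_pos])
  show "(c, P) \<in> set [(knot a b n i, rescale h (knot a b n i) q_mid),
      (knot a b n i + h, - rescale h (knot a b n i) q_mid)] \<Longrightarrow>
      poly P c = 0 \<and> poly (pderiv P) c = 0 \<and> degree P \<le> 5" for c P
    using h_pos degree_q_le degree_rescale_le[of h "knot a b n i" q_mid] q_boundary_values
    by (auto simp: poly_rescale poly_pderiv_rescale pderiv_minus)
  show "fst ` set [(knot a b n i, rescale h (knot a b n i) q_mid),
      (knot a b n i + h, - rescale h (knot a b n i) q_mid)] \<subseteq> range (knot a b n)"
    using knot_in_range[of i 0] knot_in_range[of i 1] by simp
qed simp

lemma left_edge_in_spline51: "left_edge h a \<in> spline51 a b n"
  unfolding left_edge_eq_trunc_sum[OF h_pos]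
proof (rule trunc_sum_in_spline51[OF a_less_b n_pos])
  show "(c, P) \<in> set [(a + h, - rescale h a q_left)] \<Longrightarrow>
      poly P c = 0 \<and> poly (pderiv P) c = 0 \<and> degree P \<le> 5" for c P
    using h_pos degree_q_le degree_rescale_le[of h a q_left] q_boundary_values
    by (auto simp: poly_rescale poly_pderiv_rescale pderiv_minus)
  show "fst ` set [(a + h, - rescale h a q_left)] \<subseteq> range (knot a b n)"
    using knot_in_range[of 0 1] by (simp add: knot_eq)
qed (use degree_q_le degree_rescale_le[of h a q_left] in auto)

lemma right_edge_in_spline51: "right_edge h (knot a b n i) \<in> spline51 a b n"
  unfolding right_edge_eq_trunc_sum[OF h_pos]
  using h_pos degree_q_le degree_rescale_le[of h "knot a b n i" q_right] q_boundary_values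
  by (intro trunc_sum_in_spline51[OF a_less_b n_pos]) (auto simp: poly_rescale poly_pderiv_rescale)

lemma chain_in_spline51: "chain h (knot a b n i) \<in> spline51 a b n"
proof -
  define c where "c = knot a b n i"
  have steps: "(c + h - c) / h = 1" "(c + h - (c + h)) / h = 0" "(c + 2 * h - (c + h)) / h = 1"
    "(c + 2 * h - (c + 2 * h)) / h = 0" "(c + 3 * h - (c + 2 * h)) / h = 1"
    using h_pos by (simp_all add: field_simps)
  have degrees: "degree (rescale h d q_right) \<le> 5" "degree (rescale h d q_link) \<le> 5"
    "degree (rescale h d q_left) \<le> 5" for d
    using degree_q_le degree_rescale_le[of h d] order.trans by blast+
  show ?thesis
    unfolding chain_eq_trunc_sum[OF h_pos] c_def[symmetric]
  proof (rule trunc_sum_in_spline51[OF a_less_b n_pos])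
    fix d P
    assume "(d, P) \<in> set [(c, - rescale h c q_right),
      (c + h, rescale h (c + h) q_link - (- rescale h c q_right)),
      (c + 2 * h, - rescale h (c + 2 * h) q_left - rescale h (c + h) q_link),
      (c + 3 * h, - (- rescale h (c + 2 * h) q_left))]"
    then consider "d = c" "P = - rescale h c q_right"
      | "d = c + h" "P = rescale h (c + h) q_link - (- rescale h c q_right)"
      | "d = c + 2 * h" "P = - rescale h (c + 2 * h) q_left - rescale h (c + h) q_link"
      | "d = c + 3 * h" "P = - (- rescale h (c + 2 * h) q_left)"
      by fastforce
    then show "poly P d = 0 \<and> poly (pderiv P) d = 0 \<and> degree P \<le> 5"
      by cases (use h_pos in \<open>simp_all add: poly_rescale poly_pderiv_rescale pderiv_diff
          pderiv_minus pderiv_add steps q_boundary_values degrees degree_diff_le degree_add_le\<close>)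
  next
    show "fst ` set [(c, - rescale h c q_right),
      (c + h, rescale h (c + h) q_link - (- rescale h c q_right)),
      (c + 2 * h, - rescale h (c + 2 * h) q_left - rescale h (c + h) q_link),
      (c + 3 * h, - (- rescale h (c + 2 * h) q_left))] \<subseteq> range (knot a b n)"
      using knot_in_range[of i 0] knot_in_range[of i 1] knot_in_range[of i 2]
        knot_in_range[of i 3] by (simp add: c_def)
  qed simp
qed

lemma has_integral_bump_on_interval:
  "i < n \<Longrightarrow> (bump h (knot a b n i) has_integral 0) {a..b}"
  using h_pos knot_ge[of i] knot_le[of "Suc i"]
  by (intro has_integral_vanishing_outside[OF has_integral_bump]) (auto simp: knot_Suc bump_eq_0)

lemma has_integral_left_edge_on_interval: "(left_edge h a has_integral h / 240) {a..b}"
  using h_pos knot_le[of 1] n_pos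
  by (intro has_integral_vanishing_outside[OF has_integral_left_edge])
     (auto simp: knot_eq left_edge_eq_0)

lemma has_integral_right_edge_on_interval:
  "(right_edge h (knot a b n (n - 1)) has_integral h / 240) {a..b}"
  using h_pos knot_ge[of "n - 1"] knot_last
  by (intro has_integral_vanishing_outside[OF has_integral_right_edge])
     (auto simp: right_edge_eq_0)

lemma has_integral_chain_on_interval:
  "i + 3 \<le> n \<Longrightarrow> (chain h (knot a b n i) has_integral 0) {a..b}"
  using h_pos knot_ge[of i] knot_le[of "i + 3"]
  by (intro has_integral_vanishing_outside[OF has_integral_chain])
     (auto simp: knot_eq algebra_simps chain_eq_0)

lemma nodes_at_midpoint_if_card_le_1:
  assumes "i < n" and "card {l. l < 2 * n + 1 \<and> \<tau> l \<in> cell i} \<le> 1"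
  shows "nodes_at_midpoint i"
  unfolding nodes_at_midpoint_def
proof (intro allI impI)
  fix l\<^sub>0 assume l\<^sub>0: "l\<^sub>0 < 2 * n + 1" "\<tau> l\<^sub>0 \<in> cell i"
  have "\<tau> l \<notin> cell i" if "l < 2 * n + 1" "l \<noteq> l\<^sub>0" for l
  proof
    assume "\<tau> l \<in> cell i"
    with that l\<^sub>0 have "{l, l\<^sub>0} \<subseteq> {l. l < 2 * n + 1 \<and> \<tau> l \<in> cell i}" by auto
    from card_mono[OF _ this] assms(2) that(2) show False by simp
  qed
  then have "bump h (knot a b n i) (\<tau> l\<^sub>0) = 0"
    using h_pos by (intro vanishing_at_remaining_node[OF bump_in_spline51
        has_integral_bump_on_interval[OF assms(1)] l\<^sub>0(1)]) (simp add: bump_eq_0 knot_Suc)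
  moreover define s where "s = (\<tau> l\<^sub>0 - knot a b n i) / h"
  moreover have "0 < s" "s < 1"
    using l\<^sub>0(2) h_pos by (simp_all add: s_def knot_Suc field_simps)
  ultimately have "s = 1/2"
    using l\<^sub>0(2) by (simp add: bump_def q_mid_eq_0_iff knot_Suc)
  then show "\<tau> l\<^sub>0 = knot a b n i + h / 2"
    using h_pos by (simp add: s_def field_simps)
qed

lemma nodes_at_midpoint_propagate_left:
  assumes "i + 3 \<le> n" and "nodes_at_midpoint (Suc i)"
  shows "nodes_at_midpoint i"
  unfolding nodes_at_midpoint_def
proof (intro allI impI)
  fix l\<^sub>0 assume l\<^sub>0: "l\<^sub>0 < 2 * n + 1" "\<tau> l\<^sub>0 \<in> cell i"
  let ?c = "knot a b n i"
  have "chain h ?c (\<tau> l) \<le> 0" if "l < 2 * n + 1" for l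
    using h_pos assms(2) that
    by (intro chain_nonpos) (auto simp: nodes_at_midpoint_def knot_Suc algebra_simps)
  then have "chain h ?c (\<tau> l\<^sub>0) = 0"
    by (rule vanishing_at_nodes_if_nonpos[OF chain_in_spline51
        has_integral_chain_on_interval[OF assms(1)] _ l\<^sub>0(1)])
  moreover define s where "s = (\<tau> l\<^sub>0 - ?c) / h"
  moreover have "0 < s" "s < 1"
    using l\<^sub>0(2) h_pos by (simp_all add: s_def knot_Suc field_simps)
  ultimately have "s = 1/2"
    using l\<^sub>0(2) by (simp add: chain_first_cell q_right_eq_0_iff knot_Suc)
  then show "\<tau> l\<^sub>0 = ?c + h / 2"
    using h_pos by (simp add: s_def field_simps)
qed

lemma not_nodes_at_midpoint_first: "\<not> nodes_at_midpoint 0"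
proof
  assume mid: "nodes_at_midpoint 0"
  have "left_edge h a (\<tau> l) = 0" if "l < 2 * n + 1" for l
    using h_pos node_in_interval[OF that] mid that
    by (intro left_edge_eq_0) (auto simp: nodes_at_midpoint_def knot_eq)
  with integral_eq_0_if_vanishing_at_nodes[OF left_edge_in_spline51
      has_integral_left_edge_on_interval] h_pos
  show False by simp
qed

lemma not_nodes_at_midpoint_last: "\<not> nodes_at_midpoint (n - 1)"
proof
  assume mid: "nodes_at_midpoint (n - 1)"
  have "right_edge h (knot a b n (n - 1)) (\<tau> l) = 0" if "l < 2 * n + 1" for l
    using h_pos node_in_interval[OF that] mid that knot_last n_pos
    by (intro right_edge_eq_0) (auto simp: nodes_at_midpoint_def knot_n)
  with integral_eq_0_if_vanishing_at_nodes[OF right_edge_in_spline51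
      has_integral_right_edge_on_interval] h_pos
  show False by simp
qed

lemma not_nodes_at_midpoint: "i < n \<Longrightarrow> \<not> nodes_at_midpoint i"
proof (induction i)
  case 0
  show ?case by (rule not_nodes_at_midpoint_first)
next
  case (Suc i)
  show ?case
  proof (cases "Suc i = n - 1")
    case True
    then show ?thesis using not_nodes_at_midpoint_last by simp
  next
    case False
    with Suc.prems have "i + 3 \<le> n" by simp
    with Suc show ?thesis using nodes_at_midpoint_propagate_left by auto
  qed
qed

end

theorem lemma2:
  fixes a b :: real and n :: nat and \<tau> \<omega> :: "nat \<Rightarrow> real"
  assumes "a < b" and "n \<ge> 1"
    and "gaussian_rule51 a b n \<tau> \<omega>"
    and "k \<in> {1..n}"
  shows "card {i. i < 2*n+1 \<and> \<tau> i \<in> {knot a b n (k - 1)<..<knot a b n k}} \<ge> 2"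
proof (rule ccontr)
  interpret gaussian_rule51_setup a b n \<tau> \<omega>
    using assms(1-3) by unfold_locales
  assume "\<not> ?thesis"
  moreover have "Suc (k - 1) = k" and "k - 1 < n" using assms(4) by auto
  ultimately have "nodes_at_midpoint (k - 1)"
    by (intro nodes_at_midpoint_if_card_le_1) simp_all
  with not_nodes_at_midpoint[OF \<open>k - 1 < n\<close>] show False ..
qed

end
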